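(* Let $\mathsf{X}=\mathsf{Y}=\mathbb{R}^d$ with probability measures $\mu,\nu$ and cost $c(x,y)=\|x-y\|^2$, let $\pi_\varepsilon$ be the $(c,\varepsilon)$-cyclically invariant coupling for each $\varepsilon>0$ (assumed to exist), and assume $\pi_\varepsilon\to\pi_*$ weakly as $\varepsilon\to0$ for some $\pi_*\in\Pi(\mu,\nu)$. Let $\Gamma:=\operatorname{spt}\pi_*$, $\mathsf{X}_0:=\operatorname{proj}_{\mathsf{X}}\Gamma$, $\mathsf{Y}_0:=\operatorname{proj}_{\mathsf{Y}}\Gamma$. Assume there exists a Kantorovich potential $\psi$ such that $I(x,y)=c(x,y)-\psi^c(y)+\psi(x)$ for all $(x,y)\in\mathsf{X}_0\times\mathsf{Y}_0$. Let $\mathsf{X}_0$ be strictly convex and consider $(x,y)\in(\mathsf{X}_0\times\mathsf{Y}_0)\setminus\Gamma$ with $x\in\partial\mathsf{X}_0$. Suppose that $I(\tilde x,y)>0$ for all $\tilde x\in\operatorname{Int}\mathsf{X}_0\cap B_r(x)$, for some $r>0$. Then $I(x,y)>0$.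
   Context: $\mathsf{X}_0$ is strictly convex if for distinct $x,x'\in\mathsf{X}_0$ the open segment $(x,x')$ lies in $\operatorname{Int}\mathsf{X}_0$. $\Pi(\mu,\nu)$ is the set of couplings and $P:=\mu\otimes\nu$. A coupling $\pi$ is $(c,\varepsilon)$-cyclically invariant if $\pi\sim P$ and its density admits a version $\frac{d\pi}{dP}:\mathsf{X}\times\mathsf{Y}\to(0,\infty)$ with $\prod_{i=1}^k\frac{d\pi}{dP}(x_i,y_i)=\exp\big(-\frac1\varepsilon[\sum_{i=1}^k c(x_i,y_i)-\sum_{i=1}^k c(x_i,y_{i+1})]\big)\prod_{i=1}^k\frac{d\pi}{dP}(x_i,y_{i+1})$ for all $k$ and points, $y_{k+1}:=y_1$. A proper $\psi:\mathsf{X}\to(-\infty,\infty]$ is $c$-convex if $\psi(x)=\sup_y[\zeta(y)-c(x,y)]$ for some $\zeta:\mathsf{Y}\to[-\infty,\infty]$; $\psi^c(y):=\inf_x[\psi(x)+c(x,y)]$; $\partial_c\psi=\{(x,y):\psi^c(y)-\psi(x)=c(x,y)\}$; a Kantorovich potential is a $c$-convex $\psi$ with $\Gamma\subset\partial_c\psi$. The function $I$ is $I(x,y):=\sup_{k\ge2}\sup_{(x_i,y_i)_{i=2}^k\subset\Gamma}\sup_{\sigma\in\Sigma(k)}\sum_{i=1}^k c(x_i,y_i)-\sum_{i=1}^k c(x_i,y_{\sigma(i)})$ with $(x_1,y_1):=(x,y)$ and $\Sigma(k)$ the permutations of $\{1,\dots,k\}$. *)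

theory Defs
  imports "HOL-Probability.Probability"
begin

definition ot_coupling :: "'a::euclidean_space measure \<Rightarrow> 'b::euclidean_space measure
    \<Rightarrow> ('a \<times> 'b) measure \<Rightarrow> bool" where
  "ot_coupling \<mu> \<nu> \<pi> \<longleftrightarrow> prob_space \<pi> \<and> sets \<pi> = sets borel \<and>
     distr \<pi> borel fst = \<mu> \<and> distr \<pi> borel snd = \<nu>"

definition ot_cyc_invariant :: "('a \<Rightarrow> 'b \<Rightarrow> real) \<Rightarrow> real \<Rightarrow> 'a::euclidean_space measure
    \<Rightarrow> 'b::euclidean_space measure \<Rightarrow> ('a \<times> 'b) measure \<Rightarrow> bool" where
  "ot_cyc_invariant c \<epsilon> \<mu> \<nu> \<pi> \<longleftrightarrow>
     ot_coupling \<mu> \<nu> \<pi> \<and>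
     absolutely_continuous (\<mu> \<Otimes>\<^sub>M \<nu>) \<pi> \<and> absolutely_continuous \<pi> (\<mu> \<Otimes>\<^sub>M \<nu>) \<and>
     (\<exists>f :: 'a \<times> 'b \<Rightarrow> real. f \<in> borel_measurable borel \<and> (\<forall>z. f z > 0) \<and>
        \<pi> = density (\<mu> \<Otimes>\<^sub>M \<nu>) (\<lambda>z. ennreal (f z)) \<and>
        (\<forall>k::nat. \<forall>xs ys. k \<ge> 1 \<longrightarrow>
           (\<Prod>i<k. f (xs i, ys i)) =
             exp (- (1/\<epsilon>) * ((\<Sum>i<k. c (xs i) (ys i)) - (\<Sum>i<k. c (xs i) (ys ((i+1) mod k)))))
             * (\<Prod>i<k. f (xs i, ys ((i+1) mod k)))))"

definition ot_weak_conv_at0 :: "(real \<Rightarrow> ('c::topological_space) measure) \<Rightarrow> 'c measure \<Rightarrow> bool" where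
  "ot_weak_conv_at0 P Q \<longleftrightarrow>
     (\<forall>g :: 'c \<Rightarrow> real. continuous_on UNIV g \<longrightarrow> bounded (range g) \<longrightarrow>
        ((\<lambda>\<epsilon>. integral\<^sup>L (P \<epsilon>) g) \<longlongrightarrow> integral\<^sup>L Q g) (at_right 0))"

definition ot_support :: "('c::topological_space) measure \<Rightarrow> 'c set" where
  "ot_support M = {z. \<forall>U. open U \<longrightarrow> z \<in> U \<longrightarrow> emeasure M U > 0}"

definition ot_proper :: "('a \<Rightarrow> ereal) \<Rightarrow> bool" where
  "ot_proper \<psi> \<longleftrightarrow> (\<forall>x. \<psi> x \<noteq> -\<infinity>) \<and> (\<exists>x. \<psi> x \<noteq> \<infinity>)"

definition ot_c_convex :: "('a \<Rightarrow> 'b \<Rightarrow> real) \<Rightarrow> ('a \<Rightarrow> ereal) \<Rightarrow> bool" where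
  "ot_c_convex c \<psi> \<longleftrightarrow> ot_proper \<psi> \<and>
     (\<exists>\<zeta> :: 'b \<Rightarrow> ereal. \<forall>x. \<psi> x = (SUP y. \<zeta> y - ereal (c x y)))"

definition ot_c_transform :: "('a \<Rightarrow> 'b \<Rightarrow> real) \<Rightarrow> ('a \<Rightarrow> ereal) \<Rightarrow> 'b \<Rightarrow> ereal" where
  "ot_c_transform c \<psi> y = (INF x. \<psi> x + ereal (c x y))"

definition ot_c_subdiff :: "('a \<Rightarrow> 'b \<Rightarrow> real) \<Rightarrow> ('a \<Rightarrow> ereal) \<Rightarrow> ('a \<times> 'b) set" where
  "ot_c_subdiff c \<psi> = {(x, y). ot_c_transform c \<psi> y - \<psi> x = ereal (c x y)}"

definition ot_kantorovich_potential :: "('a \<Rightarrow> 'b \<Rightarrow> real) \<Rightarrow> ('a \<times> 'b) set \<Rightarrow> ('a \<Rightarrow> ereal) \<Rightarrow> bool" where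
  "ot_kantorovich_potential c \<Gamma> \<psi> \<longleftrightarrow> ot_c_convex c \<psi> \<and> \<Gamma> \<subseteq> ot_c_subdiff c \<psi>"

definition ot_I :: "('a \<Rightarrow> 'b \<Rightarrow> real) \<Rightarrow> ('a \<times> 'b) set \<Rightarrow> 'a \<Rightarrow> 'b \<Rightarrow> ereal" where
  "ot_I c \<Gamma> x y = (SUP t \<in> {(k, xs, ys, \<sigma>). k \<ge> (2::nat) \<and> xs 1 = x \<and> ys 1 = y \<and>
        (\<forall>i\<in>{2..k}. (xs i, ys i) \<in> \<Gamma>) \<and> \<sigma> permutes {1..k}}.
      (case t of (k, xs, ys, \<sigma>) \<Rightarrow>
        ereal ((\<Sum>i=1..k. c (xs i) (ys i)) - (\<Sum>i=1..k. c (xs i) (ys (\<sigma> i))))))"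

definition ot_strictly_convex :: "('a::real_normed_vector) set \<Rightarrow> bool" where
  "ot_strictly_convex S \<longleftrightarrow> (\<forall>x\<in>S. \<forall>x'\<in>S. x \<noteq> x' \<longrightarrow> open_segment x x' \<subseteq> interior S)"

end

theory Submission
  imports Defs
begin

text \<open>For the quadratic cost, \<open>\<psi>(z) + c(z,y)\<close> is the supremum over \<open>y'\<close> of
  \<open>\<zeta>(y') + c(z,y) - c(z,y')\<close>, and each of these is affine in \<open>z\<close>. Hence the sublevel set
  \<open>{z. \<psi>(z) + c(z,y) \<le> \<psi>\<^sup>c(y)}\<close> is convex. It contains \<open>x\<close> when \<open>I(x,y) \<le> 0\<close>, and it contains
  every \<open>x\<^sub>0\<close> with \<open>(x\<^sub>0,y) \<in> \<Gamma>\<close>. Since \<open>(x,y) \<notin> \<Gamma>\<close>, such an \<open>x\<^sub>0\<close> differs from \<open>x\<close>, so by strict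
  convexity the open segment from \<open>x\<close> to \<open>x\<^sub>0\<close> meets \<open>Int X\<^sub>0 \<inter> B\<^sub>r(x)\<close>. At such a point
  \<open>I \<le> 0\<close>, a contradiction.\<close>

lemma norm_diff_sq_diff_eq:
  fixes z y y' :: "'a::real_inner"
  shows "(norm (z - y))\<^sup>2 - (norm (z - y'))\<^sup>2 = (norm y)\<^sup>2 - (norm y')\<^sup>2 - 2 * inner z (y - y')"
  by (simp add: power2_norm_eq_inner inner_diff_left inner_diff_right inner_commute algebra_simps)

lemma convex_sublevel_sq_c_convex:
  fixes \<psi> \<zeta> :: "'a::real_inner \<Rightarrow> ereal"
  assumes \<psi>: "\<And>z. \<psi> z = (SUP y'. \<zeta> y' - ereal ((norm (z - y'))\<^sup>2))"
  shows "convex {z. \<psi> z + ereal ((norm (z - y))\<^sup>2) \<le> ereal m}"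
proof -
  define H where "H y' = {z. \<zeta> y' - ereal ((norm (z - y'))\<^sup>2) \<le> ereal (m - (norm (z - y))\<^sup>2)}"
    for y'
  have "{z. \<psi> z + ereal ((norm (z - y))\<^sup>2) \<le> ereal m} = (\<Inter>y'. H y')"
  proof -
    have "\<psi> z + ereal b \<le> ereal m \<longleftrightarrow> \<psi> z \<le> ereal (m - b)" for z b
      by (cases "\<psi> z") auto
    then show ?thesis
      unfolding H_def by (auto simp: \<psi> SUP_le_iff)
  qed
  moreover have "convex (H y')" for y'
  proof (cases "\<zeta> y'")
    case (real a)
    have "a - (norm (z - y'))\<^sup>2 \<le> m - (norm (z - y))\<^sup>2 \<longleftrightarrow>
        inner (2 *\<^sub>R (y' - y)) z \<le> m - a - (norm y)\<^sup>2 + (norm y')\<^sup>2" for z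
      using norm_diff_sq_diff_eq[of z y y'] by (simp add: inner_commute inner_diff_right) linarith
    then have "H y' = {z. inner (2 *\<^sub>R (y' - y)) z \<le> m - a - (norm y)\<^sup>2 + (norm y')\<^sup>2}"
      unfolding H_def real by simp
    then show ?thesis by (simp only: convex_halfspace_le)
  qed (simp_all add: H_def)
  ultimately show ?thesis by (simp add: convex_INT)
qed

lemma c_transform_eq_at_c_subdiff:
  assumes "(x, y) \<in> ot_c_subdiff c \<psi>" and "\<psi> x \<noteq> -\<infinity>"
  obtains p where "\<psi> x = ereal p" and "ot_c_transform c \<psi> y = ereal (p + c x y)"
  using assms unfolding ot_c_subdiff_def
  by (cases "\<psi> x"; cases "ot_c_transform c \<psi> y") (auto simp: algebra_simps)

lemma open_segment_meets_ball:
  fixes x x' :: "'a::euclidean_space"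
  assumes "x \<noteq> x'" and "r > 0"
  obtains z where "z \<in> open_segment x x'" and "z \<in> ball x r"
  using assms closure_approachableD[of x "open_segment x x'" r] by auto

theorem lemma5p4:
  fixes \<mu> \<nu> :: "'a::euclidean_space measure"
    and \<pi>\<epsilon> :: "real \<Rightarrow> ('a \<times> 'a) measure"
    and \<pi>s :: "('a \<times> 'a) measure"
    and c :: "'a \<Rightarrow> 'a \<Rightarrow> real"
    and \<psi> :: "'a \<Rightarrow> ereal"
    and x y :: 'a and r :: real
  assumes c_def: "c = (\<lambda>x y. (norm (x - y))\<^sup>2)"
    and \<mu>: "prob_space \<mu>" "sets \<mu> = sets borel"
    and \<nu>: "prob_space \<nu>" "sets \<nu> = sets borel"
    and cyc: "\<And>\<epsilon>. \<epsilon> > 0 \<Longrightarrow> ot_cyc_invariant c \<epsilon> \<mu> \<nu> (\<pi>\<epsilon> \<epsilon>)"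
    and lim_coupling: "ot_coupling \<mu> \<nu> \<pi>s"
    and weak: "ot_weak_conv_at0 \<pi>\<epsilon> \<pi>s"
    and pot: "ot_kantorovich_potential c (ot_support \<pi>s) \<psi>"
    and I_eq: "\<And>x' y'. x' \<in> fst ` ot_support \<pi>s \<Longrightarrow> y' \<in> snd ` ot_support \<pi>s \<Longrightarrow>
         ot_I c (ot_support \<pi>s) x' y' = ereal (c x' y') - ot_c_transform c \<psi> y' + \<psi> x'"
    and strict: "ot_strictly_convex (fst ` ot_support \<pi>s)"
    and xy: "(x, y) \<in> (fst ` ot_support \<pi>s \<times> snd ` ot_support \<pi>s) - ot_support \<pi>s"
    and bdry: "x \<in> frontier (fst ` ot_support \<pi>s)"
    and r: "r > 0"
    and near: "\<And>x'. x' \<in> interior (fst ` ot_support \<pi>s) \<inter> ball x r \<Longrightarrow>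
         ot_I c (ot_support \<pi>s) x' y > 0"
  shows "ot_I c (ot_support \<pi>s) x y > 0"
proof (rule ccontr)
  assume neg: "\<not> ot_I c (ot_support \<pi>s) x y > 0"
  define \<Gamma> X where "\<Gamma> = ot_support \<pi>s" and "X = fst ` \<Gamma>"
  obtain x\<^sub>0 where x\<^sub>0: "(x\<^sub>0, y) \<in> \<Gamma>" using xy unfolding \<Gamma>_def by force
  have "x \<noteq> x\<^sub>0" using xy x\<^sub>0 unfolding \<Gamma>_def by auto
  from pot obtain \<zeta> where \<zeta>: "\<And>z. \<psi> z = (SUP y'. \<zeta> y' - ereal (c z y'))"
    and proper: "\<And>z. \<psi> z \<noteq> -\<infinity>" and "\<Gamma> \<subseteq> ot_c_subdiff c \<psi>"
    unfolding ot_kantorovich_potential_def ot_c_convex_def ot_proper_def \<Gamma>_def by blast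
  with x\<^sub>0 obtain p where "\<psi> x\<^sub>0 = ereal p" and T: "ot_c_transform c \<psi> y = ereal (p + c x\<^sub>0 y)"
    by (meson c_transform_eq_at_c_subdiff subsetD)
  define L where "L = {z. \<psi> z + ereal (c z y) \<le> ereal (p + c x\<^sub>0 y)}"
  have I_le_iff: "ot_I c \<Gamma> z y \<le> 0 \<longleftrightarrow> z \<in> L" if "z \<in> X" for z
    using I_eq[of z y] that xy proper[of z] unfolding T L_def \<Gamma>_def X_def
    by (cases "\<psi> z") auto
  have "convex L"
    unfolding L_def c_def by (rule convex_sublevel_sq_c_convex) (use \<zeta> c_def in simp)
  moreover have "x \<in> L" using I_le_iff xy neg unfolding X_def \<Gamma>_def by force
  moreover have "x\<^sub>0 \<in> L" using \<open>\<psi> x\<^sub>0 = ereal p\<close> unfolding L_def by simp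
  ultimately have "closed_segment x x\<^sub>0 \<subseteq> L" by (rule closed_segment_subset[rotated 2])
  obtain z where z: "z \<in> open_segment x x\<^sub>0" "z \<in> ball x r"
    using open_segment_meets_ball \<open>x \<noteq> x\<^sub>0\<close> r by blast
  then have "z \<in> L" using \<open>closed_segment x x\<^sub>0 \<subseteq> L\<close> segment_open_subset_closed by blast
  have "z \<in> interior X"
    using strict z xy x\<^sub>0 \<open>x \<noteq> x\<^sub>0\<close> unfolding ot_strictly_convex_def X_def \<Gamma>_def by force
  then have "ot_I c \<Gamma> z y > 0" using near z unfolding X_def \<Gamma>_def by blast
  with \<open>z \<in> L\<close> \<open>z \<in> interior X\<close> show False using I_le_iff interior_subset by force
qed

end
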